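(* Let $\varphi$ be a DBI normal formula and let $\theta$ be a formula that is independent of $\varphi$. Then for every pointed Kripke model $(\mathcal{M},v)$: $\mathcal{M},v\vDash\theta$ if and only if $\mathcal{M}\odot\mathcal{U}_\varphi,(v,0)\vDash\theta$.
   Context: Agents $\mathcal{A}=\{1,\dots,n\}$, $n>1$; language $\mathcal{L}$: $\varphi ::= p \mid \neg\varphi \mid (\varphi\wedge\varphi)\mid B_i\varphi$, $\top$ the usual tautology. Kripke model $\mathcal{M}=\langle S,R,V\rangle$ (nonempty $S$, $R_i\subseteq S\times S$, $V:\mathit{Prop}\to 2^S$), standard truth. Action model $\mathcal{U}=\langle E,Q,\mathsf{pre}\rangle$ (nonempty $E$, $Q_i\subseteq E\times E$, $\mathsf{pre}:E\to\mathcal{L}$). Pointed update of $(\mathcal{M},w)$ with $(\mathcal{U},\alpha)$, defined iff $\mathcal{M},w\vDash\mathsf{pre}(\alpha)$: with $T=\{(x,\beta)\in S\times E\mid\mathcal{M},x\vDash\mathsf{pre}(\beta)\}$, $\mathcal{M}\odot\mathcal{U}=\langle S^{\mathcal U},R^{\mathcal U},V^{\mathcal U}\rangle$ where $S^{\mathcal U}$ is the smallest subset of $T$ containing $(w,\alpha)$ closed under: $(x,\beta)\in S^{\mathcal U}$, $(u,\gamma)\in T$, $xR_iu$, $\beta Q_i\gamma$ imply $(u,\gamma)\in S^{\mathcal U}$; $R^{\mathcal U}_i$ relates $(x,\beta),(u,\gamma)\in S^{\mathcal U}$ iff $xR_iu$ and $\beta Q_i\gamma$; $V^{\mathcal U}(p)=\{(x,\beta)\in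 S^{\mathcal U}\mid x\in V(p)\}$. Target agents: $\mathsf{ta}(p)=\varnothing$, $\mathsf{ta}(\neg\phi)=\mathsf{ta}(\phi)$, $\mathsf{ta}(\phi\wedge\psi)=\mathsf{ta}(\phi)\cup\mathsf{ta}(\psi)$, $\mathsf{ta}(B_i\phi)=\{i\}$. DBI formulas: $\varphi ::= B_i\xi \mid B_i(\xi\wedge\varphi)\mid(\varphi\wedge\varphi)\mid B_i\varphi$, $\xi$ purely propositional. DBI normal: $B_i\xi$ always; $B_i\varphi$, $B_i(\xi\wedge\varphi)$ iff $\varphi$ DBI normal and $i\notin\mathsf{ta}(\varphi)$; $\varphi\wedge\psi$ iff both DBI normal and $\mathsf{ta}(\varphi)\cap\mathsf{ta}(\psi)=\varnothing$. Action model $\mathcal{U}_\varphi=\langle E^\varphi,Q^\varphi,\mathsf{pre}^\varphi\rangle$ for DBI normal $\varphi$, recursively; always $E^\varphi=\{0,-1\}\sqcup D^\varphi$, $\varnothing\ne D^\varphi\subseteq\{1,2,\dots\}$, $\mathsf{pre}^\varphi(0)=\mathsf{pre}^\varphi(-1)=\top$; $\underline{Q}_j$ denotes $Q_j\cap((E\setminus\{0\})\times(E\setminus\{0\}))$. (1) $\varphi=B_i\xi$: $D=\{m\}$, $\mathsf{pre}(m)=\xi$, $Q_j=\{(0,-1),(m,-1),(-1,-1)\}$ ($j\ne i$), $Q_i=\{(0,m),(m,m),(-1,-1)\}$. (2) $\varphi=B_i\psi$: fresh $m\ge1$, $m\notin D^\psi$; $D^\varphi=D^\psi\sqcup\{m\}$;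 $\mathsf{pre}^\varphi$ extends $\mathsf{pre}^\psi$ with $\mathsf{pre}^\varphi(m)=\top$; $Q^\varphi_j=\underline{Q}^\psi_j\cup\{(0,-1)\}\cup\{(m,k)\mid(0,k)\in Q^\psi_j\}$ ($j\ne i$); $Q^\varphi_i=\underline{Q}^\psi_i\cup\{(0,m),(m,m)\}$. (3) $\varphi=B_i(\xi\wedge\psi)$: as (2) but $\mathsf{pre}^\varphi(m)=\xi$. (4) $\varphi=\psi\wedge\theta$: with $D^\psi\cap D^\theta=\varnothing$, $D^\varphi=D^\psi\sqcup D^\theta$, $\mathsf{pre}^\varphi=\mathsf{pre}^\psi\cup\mathsf{pre}^\theta$, $Q^\varphi_j=\underline{Q}^\psi_j\cup\underline{Q}^\theta_j\cup\{(0,k)\mid(0,k)\in Q^\psi_j\cup Q^\theta_j, k\in D^\psi\sqcup D^\theta\}\cup\{(0,-1)\mid\text{no such }k\text{ exists}\}$. In $\mathcal{U}_\varphi$ every event has exactly one $Q^\varphi_j$-successor for each agent $j$. Independence: the modality sequences of a formula $\theta$ are the empty sequence together with, for each occurrence of a subformula $B_i\eta$ in $\theta$, the sequence $B_{i_1}\dots B_{i_k}$ of belief operators on the path from the root of the syntax tree of $\theta$ to that occurrence (so $i_k=i$). $\theta$ is in $\top$-shape w.r.t. event $\alpha_0\in E^\varphi$ iff for every modality sequence $B_{i_1}\dots B_{i_k}$ of $\theta$ ($k\ge0$), the unique events $\alpha_1,\dots,\alpha_k$ with $\alpha_0Q^\varphi_{i_1}\alpha_1Q^\varphi_{i_2}\alpha_2\cdots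 Q^\varphi_{i_k}\alpha_k$ satisfy $\mathsf{pre}^\varphi(\alpha_j)=\top$ for all $0\le j\le k$. $\theta$ is independent of $\varphi$ iff it is in $\top$-shape w.r.t. $0$. *)

theory Defs
  imports Main
begin

datatype ('p, 'a) fm =
    Atom 'p
  | Neg "('p, 'a) fm"
  | And "('p, 'a) fm" "('p, 'a) fm"
  | Bel 'a "('p, 'a) fm"

definition tt :: "('p, 'a) fm" where
  "tt = Neg (And (Atom undefined) (Neg (Atom undefined)))"

fun propositional :: "('p, 'a) fm \<Rightarrow> bool" where
  "propositional (Atom p) = True"
| "propositional (Neg f) = propositional f"
| "propositional (And f g) = (propositional f \<and> propositional g)"
| "propositional (Bel i f) = False"

type_synonym ('s, 'a, 'p) kripke = "'s set \<times> ('a \<Rightarrow> ('s \<times> 's) set) \<times> ('p \<Rightarrow> 's set)"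

definition kripke :: "('s, 'a, 'p) kripke \<Rightarrow> bool" where
  "kripke M = (case M of (S, R, V) \<Rightarrow>
     S \<noteq> {} \<and> (\<forall>i. R i \<subseteq> S \<times> S) \<and> (\<forall>p. V p \<subseteq> S))"

fun sat :: "('s, 'a, 'p) kripke \<Rightarrow> 's \<Rightarrow> ('p, 'a) fm \<Rightarrow> bool" where
  "sat (S, R, V) w (Atom p) = (w \<in> V p)"
| "sat M w (Neg f) = (\<not> sat M w f)"
| "sat M w (And f g) = (sat M w f \<and> sat M w g)"
| "sat (S, R, V) w (Bel i f) = (\<forall>u. (w, u) \<in> R i \<longrightarrow> sat (S, R, V) u f)"

type_synonym ('e, 'a, 'p) amodel = "'e set \<times> ('a \<Rightarrow> ('e \<times> 'e) set) \<times> ('e \<Rightarrow> ('p, 'a) fm)"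

definition amodel :: "('e, 'a, 'p) amodel \<Rightarrow> bool" where
  "amodel U = (case U of (E, Q, pre) \<Rightarrow> E \<noteq> {} \<and> (\<forall>i. Q i \<subseteq> E \<times> E))"

definition Tset :: "('s, 'a, 'p) kripke \<Rightarrow> ('e, 'a, 'p) amodel \<Rightarrow> ('s \<times> 'e) set" where
  "Tset M U = (case M of (S, R, V) \<Rightarrow> case U of (E, Q, pre) \<Rightarrow>
     {(x, b). x \<in> S \<and> b \<in> E \<and> sat M x (pre b)})"

inductive_set upd_states :: "('s, 'a, 'p) kripke \<Rightarrow> ('e, 'a, 'p) amodel \<Rightarrow> 's \<Rightarrow> 'e \<Rightarrow> ('s \<times> 'e) set"
  for M U w a where
  base: "(w, a) \<in> Tset M U \<Longrightarrow> (w, a) \<in> upd_states M U w a"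
| step: "\<lbrakk> (x, b) \<in> upd_states M U w a; (u, c) \<in> Tset M U;
           (x, u) \<in> fst (snd M) i; (b, c) \<in> fst (snd U) i \<rbrakk>
         \<Longrightarrow> (u, c) \<in> upd_states M U w a"

text \<open>The pointed update \<open>M \<odot> U\<close> generated from \<open>(w, a)\<close>
  (only meaningful when \<open>M, w \<Turnstile> pre a\<close>).\<close>
definition update :: "('s, 'a, 'p) kripke \<Rightarrow> ('e, 'a, 'p) amodel \<Rightarrow> 's \<Rightarrow> 'e \<Rightarrow> ('s \<times> 'e, 'a, 'p) kripke" where
  "update M U w a = (case M of (S, R, V) \<Rightarrow> case U of (E, Q, pre) \<Rightarrow>
     (upd_states M U w a,
      \<lambda>i. {((x, b), (u, c)). (x, b) \<in> upd_states M U w a \<and> (u, c) \<in> upd_states M U w a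
                            \<and> (x, u) \<in> R i \<and> (b, c) \<in> Q i},
      \<lambda>p. {(x, b). (x, b) \<in> upd_states M U w a \<and> x \<in> V p}))"

definition pre_defined :: "('s, 'a, 'p) kripke \<Rightarrow> ('e, 'a, 'p) amodel \<Rightarrow> 's \<Rightarrow> 'e \<Rightarrow> bool" where
  "pre_defined M U w a = (case U of (E, Q, pre) \<Rightarrow> sat M w (pre a))"

fun ta :: "('p, 'a) fm \<Rightarrow> 'a set" where
  "ta (Atom p) = {}"
| "ta (Neg f) = ta f"
| "ta (And f g) = ta f \<union> ta g"
| "ta (Bel i f) = {i}"

inductive dbi :: "('p, 'a) fm \<Rightarrow> bool" where
  "propositional xi \<Longrightarrow> dbi (Bel i xi)"
| "propositional xi \<Longrightarrow> dbi f \<Longrightarrow> dbi (Bel i (And xi f))"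
| "dbi f \<Longrightarrow> dbi g \<Longrightarrow> dbi (And f g)"
| "dbi f \<Longrightarrow> dbi (Bel i f)"

inductive dbi_normal :: "('p, 'a) fm \<Rightarrow> bool" where
  "propositional xi \<Longrightarrow> dbi_normal (Bel i xi)"
| "dbi_normal f \<Longrightarrow> i \<notin> ta f \<Longrightarrow> dbi_normal (Bel i f)"
| "propositional xi \<Longrightarrow> dbi_normal f \<Longrightarrow> i \<notin> ta f \<Longrightarrow> dbi_normal (Bel i (And xi f))"
| "dbi_normal f \<Longrightarrow> dbi_normal g \<Longrightarrow> ta f \<inter> ta g = {} \<Longrightarrow> dbi_normal (And f g)"

definition Qbar :: "('a \<Rightarrow> (int \<times> int) set) \<Rightarrow> 'a \<Rightarrow> (int \<times> int) set" where
  "Qbar Q j = {(x, y). (x, y) \<in> Q j \<and> x \<noteq> 0 \<and> y \<noteq> 0}"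

text \<open>\<open>Ucon phi D Q pre\<close>: \<open>(E, Q, pre)\<close> with \<open>E = {0,-1} \<union> D\<close> is one admissible
  construction of \<open>U_phi\<close> (the fresh labels m and the disjoint label sets are
  arbitrary choices; the relation covers all of them). Preconditions are
  constrained only on E.\<close>
inductive Ucon :: "('p, 'a) fm \<Rightarrow> int set \<Rightarrow> ('a \<Rightarrow> (int \<times> int) set) \<Rightarrow> (int \<Rightarrow> ('p, 'a) fm) \<Rightarrow> bool" where
  c1: "\<lbrakk> propositional xi; m \<ge> 1; pre 0 = tt; pre (-1) = tt; pre m = xi;
         \<And>j. j \<noteq> i \<Longrightarrow> Q j = {(0, -1), (m, -1), (-1, -1)};
         Q i = {(0, m), (m, m), (-1, -1)} \<rbrakk>
       \<Longrightarrow> Ucon (Bel i xi) {m} Q pre"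
| c2: "\<lbrakk> Ucon f D' Q' pre'; m \<ge> 1; m \<notin> D';
         pre 0 = tt; pre (-1) = tt; pre m = tt; \<And>k. k \<in> D' \<Longrightarrow> pre k = pre' k;
         \<And>j. j \<noteq> i \<Longrightarrow> Q j = Qbar Q' j \<union> {(0, -1)} \<union> {(m, k) | k. (0, k) \<in> Q' j};
         Q i = Qbar Q' i \<union> {(0, m), (m, m)} \<rbrakk>
       \<Longrightarrow> Ucon (Bel i f) (D' \<union> {m}) Q pre"
| c3: "\<lbrakk> propositional xi; Ucon f D' Q' pre'; m \<ge> 1; m \<notin> D';
         pre 0 = tt; pre (-1) = tt; pre m = xi; \<And>k. k \<in> D' \<Longrightarrow> pre k = pre' k;
         \<And>j. j \<noteq> i \<Longrightarrow> Q j = Qbar Q' j \<union> {(0, -1)} \<union> {(m, k) | k. (0, k) \<in> Q' j};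
         Q i = Qbar Q' i \<union> {(0, m), (m, m)} \<rbrakk>
       \<Longrightarrow> Ucon (Bel i (And xi f)) (D' \<union> {m}) Q pre"
| c4: "\<lbrakk> Ucon f D1 Q1 pre1; Ucon g D2 Q2 pre2; D1 \<inter> D2 = {};
         pre 0 = tt; pre (-1) = tt;
         \<And>k. k \<in> D1 \<Longrightarrow> pre k = pre1 k; \<And>k. k \<in> D2 \<Longrightarrow> pre k = pre2 k;
         \<And>j. Q j = Qbar Q1 j \<union> Qbar Q2 j
                  \<union> {(0, k) | k. (0, k) \<in> Q1 j \<union> Q2 j \<and> k \<in> D1 \<union> D2}
                  \<union> (if \<exists>k. (0, k) \<in> Q1 j \<union> Q2 j \<and> k \<in> D1 \<union> D2 then {} else {(0, -1)}) \<rbrakk>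
       \<Longrightarrow> Ucon (And f g) (D1 \<union> D2) Q pre"

definition Uevents :: "int set \<Rightarrow> int set" where
  "Uevents D = {0, -1} \<union> D"

text \<open>Modality sequences: the empty one plus, for every occurrence of a
  subformula \<open>B_i eta\<close>, the agents of belief operators on the path from the root
  to (and including) that occurrence.\<close>
fun mseqs :: "('p, 'a) fm \<Rightarrow> 'a list set" where
  "mseqs (Atom p) = {[]}"
| "mseqs (Neg f) = mseqs f"
| "mseqs (And f g) = mseqs f \<union> mseqs g"
| "mseqs (Bel i f) = {[]} \<union> (\<lambda>s. i # s) ` mseqs f"

fun wpath :: "('a \<Rightarrow> ('e \<times> 'e) set) \<Rightarrow> 'e \<Rightarrow> 'a list \<Rightarrow> 'e list \<Rightarrow> bool" where
  "wpath Q a [] [] = True"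
| "wpath Q a (i # is) (b # bs) = ((a, b) \<in> Q i \<and> wpath Q b is bs)"
| "wpath Q a _ _ = False"

definition top_shape :: "('p, 'a) fm \<Rightarrow> ('a \<Rightarrow> (int \<times> int) set) \<Rightarrow> (int \<Rightarrow> ('p, 'a) fm) \<Rightarrow> int \<Rightarrow> bool" where
  "top_shape th Q pre a0 =
     (\<forall>s \<in> mseqs th. \<forall>bs. wpath Q a0 s bs \<longrightarrow> (\<forall>b \<in> set (a0 # bs). pre b = tt))"

definition independent :: "('p, 'a) fm \<Rightarrow> ('a \<Rightarrow> (int \<times> int) set) \<Rightarrow> (int \<Rightarrow> ('p, 'a) fm) \<Rightarrow> bool" where
  "independent th Q pre = top_shape th Q pre 0"

end

theory Submission
  imports Defs
begin

text \<open>Truth of \<open>\<theta>\<close> at \<open>(v, 0)\<close> only involves the events reached from \<open>0\<close> along the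
  modality sequences of \<open>\<theta>\<close>, and independence makes all their preconditions \<open>\<top>\<close>.
  Hence every \<open>R\<^sub>i\<close>-successor \<open>u\<close> of a world \<open>x\<close> survives the update, paired with
  every \<open>Q\<^sub>i\<close>-successor of the current event; conversely, since every event of
  \<open>U\<^sub>\<phi>\<close> has a \<open>Q\<^sub>i\<close>-successor for every agent, each \<open>u\<close> does occur in some pair.
  So the projection \<open>(u, c) \<mapsto> u\<close> preserves truth of \<open>\<theta>\<close> by induction on \<open>\<theta>\<close>.\<close>

lemma sat_tt [simp]: "sat M w tt"
  unfolding tt_def by (cases M) auto

lemma Ucon_pre_zero: "Ucon f D Q pre \<Longrightarrow> pre 0 = tt"
  by (induction rule: Ucon.induct) auto

text \<open>No edge enters event \<open>0\<close>, so \<open>Qbar\<close>, which only drops edges at \<open>0\<close>, keeps a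
  successor of every other event; this is what makes \<open>U\<^sub>\<phi>\<close> serial.\<close>

lemma Ucon_edge:
  "Ucon f D Q pre \<Longrightarrow> (b, c) \<in> Q j \<Longrightarrow> b \<in> Uevents D \<and> c \<in> Uevents D - {0}"
proof (induction arbitrary: b c j rule: Ucon.induct)
  case (c1 xi m pre i Q)
  then show ?case by (cases "j = i") (auto simp: Uevents_def)
next
  case (c2 f D' Q' pre' m pre i Q)
  then show ?case by (cases "j = i") (auto simp: Uevents_def Qbar_def dest: c2.IH)
next
  case (c3 xi f D' Q' pre' m pre i Q)
  then show ?case by (cases "j = i") (auto simp: Uevents_def Qbar_def dest: c3.IH)
next
  case (c4 f D1 Q1 pre1 g D2 Q2 pre2 pre Q)
  then show ?case by (auto simp: Uevents_def Qbar_def split: if_splits dest: c4.IH)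
qed

lemma serial_Bel_step:
  assumes serial: "\<And>b. b \<in> Uevents D' \<Longrightarrow> \<exists>c. (b, c) \<in> Q' j"
    and nonzero: "\<And>b c. (b, c) \<in> Q' j \<Longrightarrow> c \<noteq> 0"
    and Qj: "j \<noteq> i \<Longrightarrow> Q j = Qbar Q' j \<union> {(0, -1)} \<union> {(m, k) | k. (0, k) \<in> Q' j}"
    and Qi: "Q i = Qbar Q' i \<union> {(0, m), (m, m)}"
    and b: "b \<in> Uevents (D' \<union> {m})"
  shows "\<exists>c. (b, c) \<in> Q j"
proof -
  consider "b = 0" | "b = m" | "b \<in> Uevents D'" "b \<noteq> 0"
    using b by (auto simp: Uevents_def)
  then show ?thesis
  proof cases
    case 1
    then show ?thesis using Qj Qi by (cases "j = i") auto
  next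
    case 2
    obtain k where "(0, k) \<in> Q' j" using serial[of 0] by (auto simp: Uevents_def)
    then show ?thesis using 2 Qj Qi by (cases "j = i") auto
  next
    case 3
    then obtain c where "(b, c) \<in> Qbar Q' j"
      using serial nonzero by (force simp: Qbar_def)
    then show ?thesis using Qj Qi by (cases "j = i") auto
  qed
qed

lemma Ucon_serial: "Ucon f D Q pre \<Longrightarrow> b \<in> Uevents D \<Longrightarrow> \<exists>c. (b, c) \<in> Q j"
proof (induction arbitrary: b j rule: Ucon.induct)
  case (c1 xi m pre i Q)
  then show ?case by (cases "j = i") (auto simp: Uevents_def)
next
  case (c2 f D' Q' pre' m pre i Q)
  have nonzero: "(b', c) \<in> Q' j \<Longrightarrow> c \<noteq> 0" for b' c
    using Ucon_edge[OF c2.hyps(1)] by blast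
  show ?case
    by (rule serial_Bel_step[where j = j, OF c2.IH nonzero c2.hyps(8) c2.hyps(9) c2.prems])
next
  case (c3 xi f D' Q' pre' m pre i Q)
  have nonzero: "(b', c) \<in> Q' j \<Longrightarrow> c \<noteq> 0" for b' c
    using Ucon_edge[OF c3.hyps(2)] by blast
  show ?case
    by (rule serial_Bel_step[where j = j, OF c3.IH nonzero c3.hyps(9) c3.hyps(10) c3.prems])
next
  case (c4 f D1 Q1 pre1 g D2 Q2 pre2 pre Q)
  have Qbar_succ: "\<exists>c. (b, c) \<in> Qbar Q' j"
    if Ucon: "Ucon h D' Q' pre'" and serial: "\<And>b. b \<in> Uevents D' \<Longrightarrow> \<exists>c. (b, c) \<in> Q' j"
      and "b \<in> Uevents D'" "b \<noteq> 0" for h D' Q' pre'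
  proof -
    obtain c where "(b, c) \<in> Q' j" using serial \<open>b \<in> Uevents D'\<close> by blast
    moreover have "c \<noteq> 0" using Ucon_edge[OF Ucon calculation] by blast
    ultimately show ?thesis using \<open>b \<noteq> 0\<close> by (auto simp: Qbar_def)
  qed
  show ?case
  proof (cases "b = 0")
    case True
    then show ?thesis
      using c4.hyps(8)[of j] by (cases "\<exists>k. (0, k) \<in> Q1 j \<union> Q2 j \<and> k \<in> D1 \<union> D2") auto
  next
    case False
    then have "b \<in> Uevents D1 \<or> b \<in> Uevents D2"
      using c4.prems by (auto simp: Uevents_def)
    then show ?thesis
      using Qbar_succ[OF c4.hyps(1) c4.IH(1)] Qbar_succ[OF c4.hyps(2) c4.IH(2)] False
        c4.hyps(8)[of j] by blast
  qed
qed

lemma mseqs_Nil: "[] \<in> mseqs th"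
  by (induction th) auto

lemma top_shape_Neg [simp]: "top_shape (Neg f) Q pre a = top_shape f Q pre a"
  by (simp add: top_shape_def)

lemma top_shape_And [simp]:
  "top_shape (And f g) Q pre a \<longleftrightarrow> top_shape f Q pre a \<and> top_shape g Q pre a"
  by (auto simp: top_shape_def)

lemma top_shape_Bel_succ:
  assumes "top_shape (Bel i f) Q pre a" "(a, c) \<in> Q i"
  shows "pre c = tt" "top_shape f Q pre c"
proof -
  have "wpath Q a [i] [c]" "[i] \<in> mseqs (Bel i f)"
    using assms(2) mseqs_Nil[of f] by auto
  then show "pre c = tt"
    using assms(1) unfolding top_shape_def by fastforce
  show "top_shape f Q pre c"
    unfolding top_shape_def
  proof (intro ballI allI impI)
    fix s bs b
    assume "s \<in> mseqs f" "wpath Q c s bs" "b \<in> set (c # bs)"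
    moreover have "wpath Q a (i # s) (c # bs)" "i # s \<in> mseqs (Bel i f)"
      using \<open>s \<in> mseqs f\<close> \<open>wpath Q c s bs\<close> assms(2) by auto
    ultimately show "pre b = tt"
      using assms(1) unfolding top_shape_def by fastforce
  qed
qed

lemma upd_states_subset_Tset: "upd_states M U w a0 \<subseteq> Tset M U"
  by (auto elim: upd_states.cases)

lemma upd_states_succ:
  assumes "(x, a) \<in> upd_states (S, R, V) (E, Q, pre) w a0"
    and "(x, u) \<in> R i" "(a, c) \<in> Q i" "u \<in> S" "c \<in> E" "sat (S, R, V) u (pre c)"
  shows "(u, c) \<in> upd_states (S, R, V) (E, Q, pre) w a0"
  using assms by (auto simp: Tset_def intro: upd_states.step)

lemma sat_update_Atom:
  assumes "(x, a) \<in> upd_states (S, R, V) (E, Q, pre) w a0"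
  shows "sat (update (S, R, V) (E, Q, pre) w a0) (x, a) (Atom p) \<longleftrightarrow> x \<in> V p"
  using assms by (simp add: update_def)

lemma sat_update_Bel:
  assumes "(x, a) \<in> upd_states (S, R, V) (E, Q, pre) w a0"
  shows "sat (update (S, R, V) (E, Q, pre) w a0) (x, a) (Bel i f) \<longleftrightarrow>
    (\<forall>u c. (u, c) \<in> upd_states (S, R, V) (E, Q, pre) w a0 \<and> (x, u) \<in> R i \<and> (a, c) \<in> Q i
      \<longrightarrow> sat (update (S, R, V) (E, Q, pre) w a0) (u, c) f)"
  using assms by (auto simp: update_def)

lemma sat_update_iff_top_shape:
  assumes R: "\<And>i. R i \<subseteq> S \<times> S"
    and Q: "\<And>b c j. (b, c) \<in> Q j \<Longrightarrow> c \<in> E"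
    and serial: "\<And>b j. b \<in> E \<Longrightarrow> \<exists>c. (b, c) \<in> Q j"
  shows "(x, a) \<in> upd_states (S, R, V) (E, Q, pre) w a0 \<Longrightarrow> top_shape th Q pre a \<Longrightarrow>
    sat (S, R, V) x th \<longleftrightarrow> sat (update (S, R, V) (E, Q, pre) w a0) (x, a) th"
proof (induction th arbitrary: x a)
  case (Atom p)
  then show ?case by (simp add: sat_update_Atom)
next
  case (Neg f)
  then show ?case by simp
next
  case (And f g)
  then show ?case by simp
next
  case (Bel i f)
  let ?M = "(S, R, V)" and ?U = "(E, Q, pre)"
  let ?N = "update ?M ?U w a0"
  have "a \<in> E"
    using Bel.prems(1) upd_states_subset_Tset by (force simp: Tset_def)
  have succ: "(u, c) \<in> upd_states ?M ?U w a0"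
    and IH: "sat ?M u f \<longleftrightarrow> sat ?N (u, c) f"
    if "(x, u) \<in> R i" "(a, c) \<in> Q i" for u c
  proof -
    have "pre c = tt" "top_shape f Q pre c"
      using top_shape_Bel_succ[OF Bel.prems(2) that(2)] by auto
    moreover have "u \<in> S" "c \<in> E" using R that Q by auto
    ultimately show "(u, c) \<in> upd_states ?M ?U w a0"
      using upd_states_succ[OF Bel.prems(1) that] by simp
    then show "sat ?M u f \<longleftrightarrow> sat ?N (u, c) f"
      using Bel.IH \<open>top_shape f Q pre c\<close> by blast
  qed
  have "sat ?M x (Bel i f) \<longleftrightarrow> (\<forall>u. (x, u) \<in> R i \<longrightarrow> sat ?M u f)"
    by simp
  also have "\<dots> \<longleftrightarrow> (\<forall>u c. (x, u) \<in> R i \<and> (a, c) \<in> Q i \<longrightarrow> sat ?M u f)"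
    using serial[OF \<open>a \<in> E\<close>, of i] by blast
  also have "\<dots> \<longleftrightarrow> (\<forall>u c. (u, c) \<in> upd_states ?M ?U w a0 \<and> (x, u) \<in> R i \<and> (a, c) \<in> Q i
      \<longrightarrow> sat ?N (u, c) f)"
    using succ IH by blast
  also have "\<dots> \<longleftrightarrow> sat ?N (x, a) (Bel i f)"
    using sat_update_Bel[OF Bel.prems(1)] by simp
  finally show ?case .
qed

theorem theorem5:
  fixes phi theta :: "('p, 'a::finite) fm"
    and S :: "'s set" and R :: "'a \<Rightarrow> ('s \<times> 's) set" and V :: "'p \<Rightarrow> 's set"
    and D :: "int set" and Q :: "'a \<Rightarrow> (int \<times> int) set" and pre :: "int \<Rightarrow> ('p, 'a) fm"
  assumes "card (UNIV :: 'a set) > 1"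
    and "dbi_normal phi"
    and "Ucon phi D Q pre"
    and "independent theta Q pre"
    and "kripke (S, R, V)"
    and "v \<in> S"
  shows "sat (S, R, V) v theta \<longleftrightarrow>
         sat (update (S, R, V) (Uevents D, Q, pre) v 0) (v, 0) theta"
proof (rule sat_update_iff_top_shape)
  show "R i \<subseteq> S \<times> S" for i
    using \<open>kripke (S, R, V)\<close> by (simp add: kripke_def)
  show "c \<in> Uevents D" if "(b, c) \<in> Q j" for b c j
    using Ucon_edge[OF \<open>Ucon phi D Q pre\<close> that] by simp
  show "\<exists>c. (b, c) \<in> Q j" if "b \<in> Uevents D" for b j
    using Ucon_serial[OF \<open>Ucon phi D Q pre\<close> that] .
  have "(v, 0) \<in> Tset (S, R, V) (Uevents D, Q, pre)"
    using \<open>v \<in> S\<close> Ucon_pre_zero[OF \<open>Ucon phi D Q pre\<close>] by (simp add: Tset_def Uevents_def)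
  then show "(v, 0) \<in> upd_states (S, R, V) (Uevents D, Q, pre) v 0"
    by (rule upd_states.base)
  show "top_shape theta Q pre 0"
    using \<open>independent theta Q pre\<close> by (simp add: independent_def)
qed

end
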